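(* The optimal index-codelength for a multi-sender index-coding instance represented by $(\mathcal{G},\mathcal{U})$ is lower bounded as \begin{equation} \tilde{\ell}^*(\mathcal{G},\mathcal{U}) \geq \max V_\text{out}(\mathcal{G}^\dagger), \end{equation} where $\mathcal{G}^\dagger$ is the resultant graph after running the prune/append algorithm described in the context, and the maximization is taken over all possible sequences of pruning/appending the leaf SCCs in the algorithm.
   Context: Multi-sender single-uniprior index coding with binary messages: there are $n$ one-bit messages $x_1,\dots,x_n$ and $n$ receivers; receiver $i$ knows only $x_i$ a priori. The information-flow graph $\mathcal{G}$ on vertex set $\{1,\dots,n\}$ has an arc $(i\rightarrow j)$ iff receiver $j$ requests $x_i$. There are $S$ senders, sender $s$ knowing a subset $\mathcal{M}_s$ of the messages (every message is known to some sender); each sender transmits a codeword that is a function of its own messages only, all codewords are received noiselessly by all receivers, and $\tilde{\ell}^*(\mathcal{G},\mathcal{U})$ is the minimum total number of transmitted bits such that every receiver decodes its requested messages. The message graph $\mathcal{U}$ is the undirected graph on $\{1,\dots,n\}$ with an edge $(i,j)$ iff some sender knows both $x_i$ and $x_j$. $V_\text{out}(\mathcal{G})$ denotes the number of non-leaf vertices (vertices with at least one outgoing arc) of $\mathcal{G}$. A leaf SCC is a strongly connected component of $\mathcal{G}$ with at least two vertices and no arc leaving it; a graph is grounded if every vertex is a leaf vertex or has a directed path to a leaf vertex (equivalently, it has no leaf SCC). A leaf SCC with vertex set $\mathcal{V}_\text{S}$ is message-connected if any two of its vertices are joined by a path in $\mathcal{U}$ using only vertices of $\mathcal{V}_\text{S}$;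 message-disconnected if some two of its vertices are joined by no path in $\mathcal{U}$ at all; otherwise semi-message-connected. A semi-message-connected leaf SCC is degenerated if there exist $\mathcal{V}_\text{inside} \subset \mathcal{V}_\text{S}$ and $\mathcal{V}_\text{outside} \subseteq \mathcal{V}\setminus\mathcal{V}_\text{S}$ such that there is no edge of $\mathcal{U}$ between $\mathcal{V}_\text{inside}$ and $\mathcal{V}_\text{S}\setminus\mathcal{V}_\text{inside}$, $\mathcal{V}_\text{outside}$ contains at most one non-leaf vertex, and every $\mathcal{U}$-neighbor of $\mathcal{V}_\text{inside}$ (outside $\mathcal{V}_\text{inside}$) is either in $\mathcal{V}_\text{outside}$ or a predecessor in $\mathcal{G}$ of some vertex of $\mathcal{V}_\text{outside}$; otherwise it is non-degenerated. Operations: pruning a leaf SCC = pick any vertex of it and remove all its outgoing arcs. Appending a message-disconnected leaf SCC = add a dummy vertex $n+1$ (with $x_{n+1}=0$ known to all receivers) to $\mathcal{G}$ and $\mathcal{U}$ and an arc from some vertex of the SCC to $n+1$. Appending a degenerated leaf SCC = pick $v_\text{inside}\in\mathcal{V}_\text{inside}$ and add an arc from $v_\text{inside}$ to the unique non-leaf vertex of $\mathcal{V}_\text{outside}$ if there is one, otherwise to an arbitrary vertex of $\mathcal{V}_\text{outside}$. The algorithm repeatedly selects a leaf SCC and appends it if it is message-disconnected or degenerated, and prunes it if it is message-connected or non-degenerated, until the graph is grounded; the resulting graph is $\mathcal{G}^\dagger$. It terminates after finitely many steps. *)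

theory Defs
  imports Main
begin

text \<open>Messages/receivers are indexed by 1..n, senders by 1..S; sender s knows
the messages with indices in M s. A message assignment is x :: nat \<Rightarrow> bool
(only the values on 1..n matter). The information-flow graph is a set of arcs A,
(i,j) \<in> A meaning receiver j requests x_i.\<close>

definition valid_code ::
  "nat \<Rightarrow> (nat \<Rightarrow> nat set) \<Rightarrow> (nat \<times> nat) set \<Rightarrow> (nat \<Rightarrow> nat)
     \<Rightarrow> (nat \<Rightarrow> (nat \<Rightarrow> bool) \<Rightarrow> bool list) \<Rightarrow> bool" where
  "valid_code S M A l E \<longleftrightarrow>
     (\<forall>s\<in>{1..S}. \<forall>x. length (E s x) = l s) \<and>
     (\<forall>s\<in>{1..S}. \<forall>x y. (\<forall>k\<in>M s. x k = y k) \<longrightarrow> E s x = E s y) \<and>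
     (\<forall>(i,j)\<in>A. \<exists>D :: bool list list \<Rightarrow> bool \<Rightarrow> bool.
         \<forall>x. D (map (\<lambda>s. E s x) [1..<Suc S]) (x j) = x i)"

definition opt_codelength :: "nat \<Rightarrow> (nat \<Rightarrow> nat set) \<Rightarrow> (nat \<times> nat) set \<Rightarrow> nat" where
  "opt_codelength S M A =
     (LEAST L. \<exists>l E. valid_code S M A l E \<and> L = (\<Sum>s\<in>{1..S}. l s))"

definition msg_edges :: "nat \<Rightarrow> (nat \<Rightarrow> nat set) \<Rightarrow> (nat \<times> nat) set" where
  "msg_edges S M = {(i,j). i \<noteq> j \<and> (\<exists>s\<in>{1..S}. i \<in> M s \<and> j \<in> M s)}"

definition nonleaf :: "(nat \<times> nat) set \<Rightarrow> nat \<Rightarrow> bool" where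
  "nonleaf A v \<longleftrightarrow> (\<exists>w. (v,w) \<in> A)"

definition V_out :: "nat set \<Rightarrow> (nat \<times> nat) set \<Rightarrow> nat" where
  "V_out V A = card {v\<in>V. nonleaf A v}"

definition is_SCC :: "nat set \<Rightarrow> (nat \<times> nat) set \<Rightarrow> nat set \<Rightarrow> bool" where
  "is_SCC V A C \<longleftrightarrow> C \<noteq> {} \<and> C \<subseteq> V \<and>
     (\<forall>x\<in>C. \<forall>y\<in>C. (x,y) \<in> A\<^sup>*) \<and>
     (\<forall>y\<in>V. (\<exists>x\<in>C. (x,y) \<in> A\<^sup>* \<and> (y,x) \<in> A\<^sup>*) \<longrightarrow> y \<in> C)"

definition leaf_SCC :: "nat set \<Rightarrow> (nat \<times> nat) set \<Rightarrow> nat set \<Rightarrow> bool" where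
  "leaf_SCC V A C \<longleftrightarrow> is_SCC V A C \<and> card C \<ge> 2 \<and>
     (\<forall>x y. x \<in> C \<and> (x,y) \<in> A \<longrightarrow> y \<in> C)"

definition grounded :: "nat set \<Rightarrow> (nat \<times> nat) set \<Rightarrow> bool" where
  "grounded V A \<longleftrightarrow> (\<forall>v\<in>V. \<not> nonleaf A v \<or> (\<exists>u. \<not> nonleaf A u \<and> (v,u) \<in> A\<^sup>+))"

definition msg_connected :: "(nat \<times> nat) set \<Rightarrow> nat set \<Rightarrow> bool" where
  "msg_connected UE C \<longleftrightarrow> (\<forall>a\<in>C. \<forall>b\<in>C. (a,b) \<in> (UE \<inter> (C \<times> C))\<^sup>*)"

definition msg_disconnected :: "(nat \<times> nat) set \<Rightarrow> nat set \<Rightarrow> bool" where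
  "msg_disconnected UE C \<longleftrightarrow> (\<exists>a\<in>C. \<exists>b\<in>C. (a,b) \<notin> (UE \<union> UE\<inverse>)\<^sup>*)"

definition semi_msg_connected :: "(nat \<times> nat) set \<Rightarrow> nat set \<Rightarrow> bool" where
  "semi_msg_connected UE C \<longleftrightarrow> \<not> msg_connected UE C \<and> \<not> msg_disconnected UE C"

definition degen_witness ::
  "(nat \<times> nat) set \<Rightarrow> nat set \<Rightarrow> (nat \<times> nat) set \<Rightarrow> nat set \<Rightarrow> nat set \<Rightarrow> nat set \<Rightarrow> bool" where
  "degen_witness UE V A C Vin Vout \<longleftrightarrow>
     Vin \<noteq> {} \<and> Vin \<subset> C \<and> Vout \<subseteq> V - C \<and>
     (\<forall>a\<in>Vin. \<forall>b\<in>C - Vin. (a,b) \<notin> UE \<and> (b,a) \<notin> UE) \<and>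
     card {v\<in>Vout. nonleaf A v} \<le> 1 \<and>
     (\<forall>u. u \<notin> Vin \<and> (\<exists>w\<in>Vin. (w,u) \<in> UE \<or> (u,w) \<in> UE) \<longrightarrow>
          u \<in> Vout \<or> (\<exists>t\<in>Vout. (u,t) \<in> A))"

definition degenerated ::
  "(nat \<times> nat) set \<Rightarrow> nat set \<Rightarrow> (nat \<times> nat) set \<Rightarrow> nat set \<Rightarrow> bool" where
  "degenerated UE V A C \<longleftrightarrow> semi_msg_connected UE C \<and> (\<exists>Vin Vout. degen_witness UE V A C Vin Vout)"

definition prune_step :: "nat set \<Rightarrow> (nat \<times> nat) set \<Rightarrow> nat set \<Rightarrow> nat set \<Rightarrow> (nat \<times> nat) set \<Rightarrow> bool" where
  "prune_step V A C V' A' \<longleftrightarrow> (\<exists>v\<in>C. V' = V \<and> A' = A - {(v,w) | w. True})"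

text \<open>Appending a message-disconnected leaf SCC: a fresh dummy vertex (isolated in U)
and an arc from a vertex of C to it.\<close>
definition append_disc_step :: "nat set \<Rightarrow> (nat \<times> nat) set \<Rightarrow> nat set \<Rightarrow> nat set \<Rightarrow> (nat \<times> nat) set \<Rightarrow> bool" where
  "append_disc_step V A C V' A' \<longleftrightarrow>
     (\<exists>v\<in>C. V' = insert (Suc (Max V)) V \<and> A' = insert (v, Suc (Max V)) A)"

definition append_deg_step ::
  "(nat \<times> nat) set \<Rightarrow> nat set \<Rightarrow> (nat \<times> nat) set \<Rightarrow> nat set \<Rightarrow> nat set \<Rightarrow> (nat \<times> nat) set \<Rightarrow> bool" where
  "append_deg_step UE V A C V' A' \<longleftrightarrow>
     (\<exists>Vin Vout v w. degen_witness UE V A C Vin Vout \<and> v \<in> Vin \<and> w \<in> Vout \<and>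
        ((\<exists>u\<in>Vout. nonleaf A u) \<longrightarrow> nonleaf A w) \<and>
        V' = V \<and> A' = insert (v,w) A)"

definition alg_step :: "(nat \<times> nat) set \<Rightarrow> nat set \<times> (nat \<times> nat) set \<Rightarrow> nat set \<times> (nat \<times> nat) set \<Rightarrow> bool" where
  "alg_step UE st st' \<longleftrightarrow>
     (let V = fst st; A = snd st; V' = fst st'; A' = snd st' in
      \<not> grounded V A \<and>
      (\<exists>C. leaf_SCC V A C \<and>
        ((msg_disconnected UE C \<and> append_disc_step V A C V' A') \<or>
         (degenerated UE V A C \<and> append_deg_step UE V A C V' A') \<or>
         ((msg_connected UE C \<or> (semi_msg_connected UE C \<and> \<not> degenerated UE V A C)) \<and>
          prune_step V A C V' A'))))"

definition alg_result ::
  "(nat \<times> nat) set \<Rightarrow> nat set \<Rightarrow> (nat \<times> nat) set \<Rightarrow> nat set \<Rightarrow> (nat \<times> nat) set \<Rightarrow> bool" where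
  "alg_result UE V A V' A' \<longleftrightarrow> (alg_step UE)\<^sup>*\<^sup>* (V, A) (V', A') \<and> grounded V' A'"

end

theory Submission
  imports Defs
begin

text \<open>Fix an optimal code and call two message vectors confusable in a graph if they produce
the same codewords and agree at every leaf. The invariant kept by the algorithm is that, for
confusable vectors, agreement propagates backwards along every arc. It holds initially because
receiver \<open>j\<close> decodes \<open>x\<^sub>i\<close> for every arc \<open>(i,j)\<close>, and pruning only removes arcs and creates leaves.
An appended arc \<open>(v,w)\<close> starts in a leaf SCC \<open>C\<close>: given confusable \<open>x, y\<close> agreeing at \<open>w\<close>, replace
\<open>x\<close> by \<open>y\<close> on a set \<open>K \<ni> v\<close> (the message-graph component of \<open>v\<close>, resp. the set \<open>Vin\<close>
of a degeneracy witness) that no sender combines with vertices where \<open>x\<close> and \<open>y\<close> may differ. All codewords stay the same, and the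
new vector agrees with \<open>x\<close> at a vertex of \<open>C\<close> outside \<open>K\<close>, which \<open>v\<close> reaches; hence \<open>x\<^sub>v = y\<^sub>v\<close>.
In the final grounded graph every non-leaf vertex reaches a leaf, so codewords and leaf
messages determine all messages; counting vectors supported on the non-leaf vertices gives
\<open>2 ^ V_out \<le> 2 ^ (total codelength)\<close>.\<close>

definition codewords ::
  "nat \<Rightarrow> (nat \<Rightarrow> (nat \<Rightarrow> bool) \<Rightarrow> bool list) \<Rightarrow> (nat \<Rightarrow> bool) \<Rightarrow> bool list list" where
  "codewords S E x = map (\<lambda>s. E s x) [1..<Suc S]"

definition confusable ::
  "nat \<Rightarrow> (nat \<Rightarrow> (nat \<Rightarrow> bool) \<Rightarrow> bool list) \<Rightarrow> (nat \<times> nat) set \<Rightarrow> (nat \<Rightarrow> bool) \<Rightarrow> (nat \<Rightarrow> bool) \<Rightarrow> bool" where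
  "confusable S E A x y \<longleftrightarrow> codewords S E x = codewords S E y \<and> (\<forall>i. \<not> nonleaf A i \<longrightarrow> x i = y i)"

definition agreement_closed ::
  "nat \<Rightarrow> (nat \<Rightarrow> (nat \<Rightarrow> bool) \<Rightarrow> bool list) \<Rightarrow> (nat \<times> nat) set \<Rightarrow> bool" where
  "agreement_closed S E A \<longleftrightarrow>
     (\<forall>x y a b. confusable S E A x y \<longrightarrow> (a,b) \<in> A \<longrightarrow> x b = y b \<longrightarrow> x a = y a)"

lemma codewords_eq_iff: "codewords S E x = codewords S E y \<longleftrightarrow> (\<forall>s\<in>{1..S}. E s x = E s y)"
  by (auto simp: codewords_def map_eq_conv)

lemma decoder_exists:
  assumes "\<And>x y. f x = f y \<Longrightarrow> g x = g y \<Longrightarrow> h x = h y"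
  shows "\<exists>D. \<forall>x. D (f x) (g x) = h x"
proof (intro exI allI)
  fix x
  let ?z = "SOME z. f z = f x \<and> g z = g x"
  have "f ?z = f x \<and> g ?z = g x" by (rule someI) simp
  then have "h ?z = h x" by (intro assms) auto
  then show "(\<lambda>c b. h (SOME z. f z = c \<and> g z = b)) (f x) (g x) = h x" by simp
qed

lemma valid_code_lengths:
  "valid_code S M A l E \<Longrightarrow> \<forall>s\<in>{1..S}. \<forall>x. length (E s x) = l s"
  unfolding valid_code_def by (rule conjunct1)

lemma agreement_closedD:
  "agreement_closed S E A \<Longrightarrow> confusable S E A x y \<Longrightarrow> (a,b) \<in> A \<Longrightarrow> x b = y b \<Longrightarrow> x a = y a"
  unfolding agreement_closed_def by metis

lemma agreement_closed_rtrancl: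
  assumes "agreement_closed S E A" "confusable S E A x y" "(a,b) \<in> A\<^sup>*" "x b = y b"
  shows "x a = y a"
  using assms(3,4)
proof (induction rule: converse_rtrancl_induct)
  case (step a c)
  then show ?case using agreement_closedD[OF assms(1,2)] by metis
qed

lemma valid_code_agreement_closed:
  assumes "valid_code S M A l E"
  shows "agreement_closed S E A"
  unfolding agreement_closed_def
proof (intro allI impI)
  fix x y a b assume xy: "confusable S E A x y" and ab: "(a,b) \<in> A" and "x b = y b"
  have "\<forall>(i,j)\<in>A. \<exists>D. \<forall>x. D (codewords S E x) (x j) = x i"
    using assms unfolding valid_code_def codewords_def by (elim conjE)
  then obtain D where D: "\<forall>x. D (codewords S E x) (x b) = x a"
    using ab by auto
  have "x a = D (codewords S E x) (x b)" using D by simp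
  also have "\<dots> = D (codewords S E y) (y b)"
    using xy \<open>x b = y b\<close> unfolding confusable_def by simp
  also have "\<dots> = y a" using D by simp
  finally show "x a = y a" .
qed

lemma agreement_closed_subset:
  assumes "agreement_closed S E A" "A' \<subseteq> A"
  shows "agreement_closed S E A'"
proof -
  have "confusable S E A x y" if "confusable S E A' x y" for x y
    using that assms(2) unfolding confusable_def nonleaf_def by blast
  then show ?thesis
    using assms unfolding agreement_closed_def by blast
qed

lemma agreement_closed_insert:
  assumes "agreement_closed S E A" "nonleaf A v"
    and "\<And>x y. confusable S E A x y \<Longrightarrow> x w = y w \<Longrightarrow> x v = y v"
  shows "agreement_closed S E (insert (v,w) A)"
proof -
  have "nonleaf (insert (v,w) A) = nonleaf A"
    using assms(2) unfolding nonleaf_def by blast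
  then have "confusable S E (insert (v,w) A) = confusable S E A"
    unfolding confusable_def by simp
  then show ?thesis
    using assms unfolding agreement_closed_def by auto
qed

lemma finite_nonleaf: "finite A \<Longrightarrow> finite {v\<in>X. nonleaf A v}"
  by (rule finite_subset[OF _ finite_Domain]) (auto simp: nonleaf_def)

lemma leaf_SCC_reachable:
  "leaf_SCC V A C \<Longrightarrow> a \<in> C \<Longrightarrow> b \<in> C \<Longrightarrow> (a,b) \<in> A\<^sup>*"
  unfolding leaf_SCC_def is_SCC_def by blast

lemma leaf_SCC_nonleaf:
  assumes "leaf_SCC V A C" "v \<in> C"
  shows "nonleaf A v"
proof -
  have "C - {v} \<noteq> {}"
  proof
    assume "C - {v} = {}"
    then have "card C \<le> card {v}" by (intro card_mono) auto
    with assms(1) show False unfolding leaf_SCC_def by simp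
  qed
  then obtain u where "u \<in> C" "u \<noteq> v" by blast
  with assms have "(v,u) \<in> A\<^sup>*" by (blast intro: leaf_SCC_reachable)
  with \<open>u \<noteq> v\<close> show ?thesis
    unfolding nonleaf_def by (auto elim: converse_rtranclE)
qed

locale sender_local =
  fixes S :: nat and M :: "nat \<Rightarrow> nat set" and E :: "nat \<Rightarrow> (nat \<Rightarrow> bool) \<Rightarrow> bool list"
  assumes local: "s \<in> {1..S} \<Longrightarrow> (\<And>k. k \<in> M s \<Longrightarrow> x k = y k) \<Longrightarrow> E s x = E s y"

lemma valid_code_sender_local: "valid_code S M A l E \<Longrightarrow> sender_local S M E"
  unfolding valid_code_def by unfold_locales (drule conjunct1[OF conjunct2], blast)

context sender_local
begin

lemma codewords_override_on:
  assumes "codewords S E x = codewords S E y"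
    and "\<And>s m. s \<in> {1..S} \<Longrightarrow> M s \<inter> K \<noteq> {} \<Longrightarrow> m \<in> M s - K \<Longrightarrow> x m = y m"
  shows "codewords S E (override_on x y K) = codewords S E x"
  unfolding codewords_eq_iff
proof
  fix s assume s: "s \<in> {1..S}"
  show "E s (override_on x y K) = E s x"
  proof (cases "M s \<inter> K = {}")
    case True
    then show ?thesis by (intro local[OF s]) (auto simp: override_on_def)
  next
    case False
    then have "E s (override_on x y K) = E s y"
      using assms(2)[OF s] by (intro local[OF s]) (auto simp: override_on_def)
    also have "\<dots> = E s x"
      using assms(1) s unfolding codewords_eq_iff by simp
    finally show ?thesis .
  qed
qed

text \<open>Exchanging \<open>x\<close> for \<open>y\<close> on \<open>K\<close> is invisible to the senders, so the agreement of the
exchanged vector with \<open>x\<close> at \<open>b \<notin> K\<close> travels back to \<open>c \<in> K\<close>, where it equals \<open>y\<close>.\<close>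
lemma agree_by_exchange:
  assumes "agreement_closed S E A" "confusable S E A x y"
    and "\<And>s m. s \<in> {1..S} \<Longrightarrow> M s \<inter> K \<noteq> {} \<Longrightarrow> m \<in> M s - K \<Longrightarrow> x m = y m"
    and "c \<in> K" "b \<notin> K" "(c,b) \<in> A\<^sup>*"
  shows "x c = y c"
proof -
  let ?z = "override_on x y K"
  have "confusable S E A x ?z"
    using assms(2,3) codewords_override_on[of x y K]
    unfolding confusable_def by (auto simp: override_on_def)
  moreover have "x b = ?z b" using \<open>b \<notin> K\<close> by simp
  ultimately have "x c = ?z c"
    using agreement_closed_rtrancl[OF assms(1) _ assms(6)] by blast
  with \<open>c \<in> K\<close> show ?thesis by simp
qed

lemma agreement_closed_append_disc:
  assumes "agreement_closed S E A" "leaf_SCC V A C" "msg_disconnected (msg_edges S M) C" "v \<in> C"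
  shows "agreement_closed S E (insert (v,w) A)"
proof (rule agreement_closed_insert[OF assms(1) leaf_SCC_nonleaf[OF assms(2,4)]])
  fix x y assume xy: "confusable S E A x y"
  let ?R = "(msg_edges S M \<union> (msg_edges S M)\<inverse>)\<^sup>*"
  define K where "K = ?R `` {v}"
  have "sym ?R" by (intro sym_rtrancl sym_Un_converse)
  obtain a b where "a \<in> C" "b \<in> C" "(a,b) \<notin> ?R"
    using assms(3) unfolding msg_disconnected_def by blast
  with \<open>sym ?R\<close> obtain b' where b': "b' \<in> C" "b' \<notin> K"
    unfolding K_def by (metis Image_singleton_iff rtrancl_trans symD)
  have K_closed: "M s \<subseteq> K" if s: "s \<in> {1..S}" and meets: "M s \<inter> K \<noteq> {}" for s
  proof
    fix m assume "m \<in> M s"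
    obtain a where "a \<in> M s" "(v,a) \<in> ?R" using meets unfolding K_def by blast
    moreover have "(a,m) \<in> msg_edges S M \<or> a = m"
      using s \<open>a \<in> M s\<close> \<open>m \<in> M s\<close> unfolding msg_edges_def by blast
    ultimately show "m \<in> K"
      unfolding K_def by (auto intro: rtrancl_into_rtrancl)
  qed
  show "x v = y v"
    using agree_by_exchange[OF assms(1) xy _ _ b'(2)] K_closed assms(2,4) b'(1)
    by (auto simp: K_def intro: leaf_SCC_reachable)
qed

lemma agreement_closed_append_deg:
  assumes "agreement_closed S E A" "finite A" "leaf_SCC V A C"
    and "append_deg_step (msg_edges S M) V A C V' A'"
  shows "agreement_closed S E A'"
proof -
  obtain Vin Vout v w where W: "degen_witness (msg_edges S M) V A C Vin Vout"
    and v: "v \<in> Vin" and w: "w \<in> Vout" and w_nonleaf: "(\<exists>u\<in>Vout. nonleaf A u) \<longrightarrow> nonleaf A w"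
    and A': "A' = insert (v,w) A"
    using assms(4) unfolding append_deg_step_def by blast
  have Vin: "Vin \<subset> C"
    and one_nonleaf: "card {u\<in>Vout. nonleaf A u} \<le> 1"
    and nbrs: "\<And>u a. u \<notin> Vin \<Longrightarrow> a \<in> Vin \<Longrightarrow> (a,u) \<in> msg_edges S M \<Longrightarrow>
                  u \<in> Vout \<or> (\<exists>t\<in>Vout. (u,t) \<in> A)"
    using W unfolding degen_witness_def by blast+
  have "v \<in> C" using Vin v by blast
  have only_w: "t = w" if "t \<in> Vout" "nonleaf A t" for t
    using that w w_nonleaf one_nonleaf card_le_Suc0_iff_eq[OF finite_nonleaf[OF assms(2)]]
    by fastforce
  show ?thesis
    unfolding A'
  proof (rule agreement_closed_insert[OF assms(1) leaf_SCC_nonleaf[OF assms(3) \<open>v \<in> C\<close>]])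
    fix x y assume xy: "confusable S E A x y" and "x w = y w"
    have on_Vout: "x t = y t" if "t \<in> Vout" for t
      using that xy \<open>x w = y w\<close> only_w unfolding confusable_def by blast
    have exchangeable: "x m = y m"
      if s: "s \<in> {1..S}" and meets: "M s \<inter> Vin \<noteq> {}" and m: "m \<in> M s - Vin" for s m
    proof -
      obtain a where "a \<in> M s" "a \<in> Vin" using meets by blast
      with s m have "(a,m) \<in> msg_edges S M" unfolding msg_edges_def by auto
      then have "m \<in> Vout \<or> (\<exists>t\<in>Vout. (m,t) \<in> A)"
        using nbrs m \<open>a \<in> Vin\<close> by blast
      then show ?thesis
        using on_Vout assms(1) xy unfolding agreement_closed_def by blast
    qed
    obtain b where "b \<in> C" "b \<notin> Vin" using Vin by blast
    moreover have "(v,b) \<in> A\<^sup>*"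
      using assms(3) \<open>v \<in> C\<close> \<open>b \<in> C\<close> by (rule leaf_SCC_reachable)
    ultimately show "x v = y v"
      by (intro agree_by_exchange[OF assms(1) xy _ v] exchangeable)
  qed
qed

lemma alg_step_agreement_closed:
  assumes "alg_step (msg_edges S M) (V,A) (V',A')" "finite A" "agreement_closed S E A"
  shows "finite A' \<and> agreement_closed S E A'"
proof -
  obtain C where C: "leaf_SCC V A C" and
    "(msg_disconnected (msg_edges S M) C \<and> append_disc_step V A C V' A') \<or>
     append_deg_step (msg_edges S M) V A C V' A' \<or> prune_step V A C V' A'"
    using assms(1) unfolding alg_step_def Let_def by auto
  then consider
      (disc) v w where "msg_disconnected (msg_edges S M) C" "v \<in> C" "A' = insert (v,w) A"
    | (deg) v w where "append_deg_step (msg_edges S M) V A C V' A'" "A' = insert (v,w) A"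
    | (prune) "A' \<subseteq> A"
    unfolding append_disc_step_def append_deg_step_def prune_step_def by blast
  then show ?thesis
  proof cases
    case disc
    then show ?thesis
      using assms(2,3) agreement_closed_append_disc[OF assms(3) C] by simp
  next
    case deg
    then show ?thesis
      using assms(2,3) agreement_closed_append_deg[OF assms(3,2) C] by simp
  next
    case prune
    then show ?thesis
      using assms(2,3) agreement_closed_subset finite_subset by blast
  qed
qed

lemma alg_steps_agreement_closed:
  assumes "(alg_step (msg_edges S M))\<^sup>*\<^sup>* (V,A) (V',A')" "finite A" "agreement_closed S E A"
  shows "finite A' \<and> agreement_closed S E A'"
  using assms by (induction rule: rtranclp_induct2) (auto dest: alg_step_agreement_closed)

end

lemma grounded_confusable_agree:
  assumes "agreement_closed S E A" "grounded V A" "confusable S E A x y" "v \<in> V"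
  shows "x v = y v"
proof (cases "nonleaf A v")
  case True
  then obtain u where "\<not> nonleaf A u" "(v,u) \<in> A\<^sup>+"
    using assms(2,4) unfolding grounded_def by blast
  then show ?thesis
    using agreement_closed_rtrancl[OF assms(1,3)] assms(3)
    unfolding confusable_def by (blast dest: trancl_into_rtrancl)
next
  case False
  then show ?thesis using assms(3) unfolding confusable_def by blast
qed

lemma card_le_if_inj_on_Pow:
  fixes f :: "'a set \<Rightarrow> bool list"
  assumes "finite F" "inj_on f (Pow F)" "\<And>X. length (f X) = L"
  shows "card F \<le> L"
proof -
  have "(2::nat) ^ card F = card (f ` Pow F)"
    using card_Pow[OF assms(1)] card_image[OF assms(2)] by simp
  also have "\<dots> \<le> card {xs. set xs \<subseteq> (UNIV::bool set) \<and> length xs = L}"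
    using assms(3) by (intro card_mono finite_lists_length_eq) auto
  also have "\<dots> = 2 ^ L"
    using card_lists_length_eq[of "UNIV :: bool set" L] by simp
  finally show ?thesis by simp
qed

lemma length_concat_codewords:
  assumes "\<forall>s\<in>{1..S}. \<forall>x. length (E s x) = l s"
  shows "length (concat (codewords S E x)) = (\<Sum>s\<in>{1..S}. l s)"
proof -
  have "length (concat (codewords S E x)) = (\<Sum>s\<leftarrow>[1..<Suc S]. length (E s x))"
    by (simp add: codewords_def length_concat comp_def del: upt_Suc)
  also have "\<dots> = (\<Sum>s\<leftarrow>[1..<Suc S]. l s)"
    using assms by (intro arg_cong[where f = sum_list] map_cong) auto
  also have "\<dots> = (\<Sum>s\<in>{1..S}. l s)"
    by (simp add: sum_set_upt_conv_sum_list_nat[symmetric] atLeastLessThanSuc_atLeastAtMost del: upt_Suc)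
  finally show ?thesis .
qed

lemma concat_codewords_inj:
  assumes "concat (codewords S E x) = concat (codewords S E y)"
    and "\<forall>s\<in>{1..S}. \<forall>x. length (E s x) = l s"
  shows "codewords S E x = codewords S E y"
proof -
  have "\<forall>(u,w)\<in>set (zip (codewords S E x) (codewords S E y)). length u = length w"
    using assms(2) by (auto simp: codewords_def set_zip nth_upt simp del: upt_Suc)
  with assms(1) show ?thesis
    by (subst (asm) concat_eq_concat_iff) (simp_all add: codewords_def)
qed

lemma V_out_le_codelength:
  assumes "agreement_closed S E A" "finite A" "grounded V A"
    and len: "\<forall>s\<in>{1..S}. \<forall>x. length (E s x) = l s"
  shows "V_out V A \<le> (\<Sum>s\<in>{1..S}. l s)"
proof -
  define N where "N = {v\<in>V. nonleaf A v}"
  define f where "f X = concat (codewords S E (\<lambda>i. i \<in> X))" for X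
  have "finite N" unfolding N_def using assms(2) by (rule finite_nonleaf)
  have "length (f X) = (\<Sum>s\<in>{1..S}. l s)" for X
    unfolding f_def using len by (rule length_concat_codewords)
  moreover have "inj_on f (Pow N)"
  proof (rule inj_onI)
    fix X Y assume X: "X \<in> Pow N" and Y: "Y \<in> Pow N" and "f X = f Y"
    have "codewords S E (\<lambda>i. i \<in> X) = codewords S E (\<lambda>i. i \<in> Y)"
      using \<open>f X = f Y\<close> len unfolding f_def by (rule concat_codewords_inj)
    with X Y have "confusable S E A (\<lambda>i. i \<in> X) (\<lambda>i. i \<in> Y)"
      unfolding confusable_def N_def by auto
    with X Y show "X = Y"
      using grounded_confusable_agree[OF assms(1,3)] unfolding N_def by blast
  qed
  ultimately show ?thesis
    using card_le_if_inj_on_Pow[OF \<open>finite N\<close>] unfolding V_out_def N_def by blast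
qed

lemma valid_code_uncoded:
  assumes "A \<subseteq> {1..n} \<times> {1..n}" "(\<Union>s\<in>{1..S}. M s) = {1..n}"
  shows "valid_code S M A (\<lambda>s. n) (\<lambda>s x. map (\<lambda>i. i \<in> M s \<and> x i) [1..<Suc n])"
  unfolding valid_code_def
proof (intro conjI ballI allI impI)
  fix p assume "p \<in> A"
  then obtain i j where p: "p = (i,j)" and "i \<in> {1..n}" using assms(1) by blast
  then obtain s where s: "s \<in> {1..S}" "i \<in> M s" using assms(2) by blast
  let ?E = "\<lambda>s x. map (\<lambda>i. i \<in> M s \<and> x i) [1..<Suc n]"
  have "x i = y i" if "codewords S ?E x = codewords S ?E y" for x y
  proof -
    have "\<forall>k\<in>set [1..<Suc n]. (k \<in> M s \<and> x k) = (k \<in> M s \<and> y k)"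
      using that s(1) unfolding codewords_eq_iff map_eq_conv by blast
    moreover have "i \<in> set [1..<Suc n]" using \<open>i \<in> {1..n}\<close> by auto
    ultimately have "(i \<in> M s \<and> x i) = (i \<in> M s \<and> y i)" by (rule bspec)
    with s(2) show ?thesis by simp
  qed
  then have "\<exists>D. \<forall>x. D (codewords S ?E x) (x j) = x i"
    by (intro decoder_exists)
  then show "case p of (i,j) \<Rightarrow> \<exists>D. \<forall>x. D (map (\<lambda>s. ?E s x) [1..<Suc S]) (x j) = x i"
    unfolding p codewords_def by simp
qed auto

lemma opt_codelength_attained:
  assumes "A \<subseteq> {1..n} \<times> {1..n}" "(\<Union>s\<in>{1..S}. M s) = {1..n}"
  obtains l E where "valid_code S M A l E" "opt_codelength S M A = (\<Sum>s\<in>{1..S}. l s)"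
proof -
  have "\<exists>L l E. valid_code S M A l E \<and> L = (\<Sum>s\<in>{1..S}. l s)"
    using valid_code_uncoded[OF assms] by blast
  from LeastI_ex[OF this] show ?thesis
    using that unfolding opt_codelength_def by blast
qed

theorem theorem4:
  fixes n S :: nat and M :: "nat \<Rightarrow> nat set" and A :: "(nat \<times> nat) set"
  assumes "A \<subseteq> {1..n} \<times> {1..n}"
    and "\<forall>i. (i, i) \<notin> A"
    and "\<forall>s\<in>{1..S}. M s \<subseteq> {1..n}"
    and "(\<Union>s\<in>{1..S}. M s) = {1..n}"
  shows "\<forall>V' A'. alg_result (msg_edges S M) {1..n} A V' A' \<longrightarrow>
           V_out V' A' \<le> opt_codelength S M A"
proof (intro allI impI)
  fix V' A' assume "alg_result (msg_edges S M) {1..n} A V' A'"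
  then have steps: "(alg_step (msg_edges S M))\<^sup>*\<^sup>* ({1..n}, A) (V', A')" and "grounded V' A'"
    unfolding alg_result_def by auto
  obtain l E where code: "valid_code S M A l E" and opt: "opt_codelength S M A = (\<Sum>s\<in>{1..S}. l s)"
    using opt_codelength_attained[OF assms(1,4)] .
  interpret sender_local S M E
    using code by (rule valid_code_sender_local)
  have "finite A" using assms(1) finite_subset by blast
  with steps have "finite A' \<and> agreement_closed S E A'"
    using valid_code_agreement_closed[OF code] by (rule alg_steps_agreement_closed)
  then have "V_out V' A' \<le> (\<Sum>s\<in>{1..S}. l s)"
    using V_out_le_codelength \<open>grounded V' A'\<close> valid_code_lengths[OF code] by blast
  then show "V_out V' A' \<le> opt_codelength S M A" unfolding opt .
qed

end
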